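(* Let $r\ge 2$, let $Z$ be a set with $|Z|=m\ge 2r+1$, and let $A\subseteq Z$ with $|A|\in\{r-1,r\}$. Let $\mathcal{B}$ be the $r$-uniform family $\mathcal{B}=\{B\subseteq Z: |B|=r,\ 0<|B\cap A|<|A|\}$. Then $\mathcal{B}$ is non-separable.
   Context: Two families $\mathcal{A}_1,\mathcal{A}_2$ are cross-intersecting if $A_1\cap A_2\neq\emptyset$ for all $A_1\in\mathcal{A}_1$, $A_2\in\mathcal{A}_2$. A family $\mathcal{A}$ is non-separable if for every partition $\mathcal{A}=\mathcal{A}_1\cup\mathcal{A}_2$ (disjoint union) with $(\mathcal{A}_1,\mathcal{A}_2)$ cross-intersecting, we have $\mathcal{A}_1=\emptyset$ or $\mathcal{A}_2=\emptyset$. *)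

theory Defs
  imports Main
begin

definition cross_intersecting :: "'a set set \<Rightarrow> 'a set set \<Rightarrow> bool" where
  "cross_intersecting A1 A2 \<longleftrightarrow> (\<forall>X\<in>A1. \<forall>Y\<in>A2. X \<inter> Y \<noteq> {})"

definition non_separable :: "'a set set \<Rightarrow> bool" where
  "non_separable F \<longleftrightarrow>
     (\<forall>A1 A2. A1 \<union> A2 = F \<and> A1 \<inter> A2 = {} \<and> cross_intersecting A1 A2
        \<longrightarrow> A1 = {} \<or> A2 = {})"

end

theory Submission
  imports Defs
begin

text \<open>Call \<open>B\<close> straddling if it meets \<open>A\<close> without containing it. A partition into
  cross-intersecting parts puts disjoint members in the same part, so it suffices that the
  graph of disjointness on the straddling \<open>r\<close>-sets is connected. Two members whose union
  has at most \<open>r + 1\<close> points and misses a point \<open>z\<close> of \<open>A\<close> have a common disjoint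
  neighbour (\<open>z\<close> plus \<open>r - 1\<close> points outside the union, as \<open>|Z| \<ge> 2r + 1\<close>). Hence one may
  move from \<open>B\<close> to \<open>D\<close> by single-element exchanges, except when the exchange would cover
  \<open>A\<close>; that case is bypassed through a point outside \<open>A \<union> B\<close> when \<open>|A| \<ge> 3\<close>, and avoided
  altogether when \<open>|A| = 2\<close> by first jumping to a set disjoint from \<open>D\<close> with the same
  trace on \<open>A\<close> as \<open>B\<close>.\<close>

definition disjointness_graph :: "'a set set \<Rightarrow> ('a set \<times> 'a set) set" where
  "disjointness_graph F = {(X, Y). X \<in> F \<and> Y \<in> F \<and> X \<inter> Y = {}}"

lemma non_separable_if_connected:
  assumes "\<And>X Y. X \<in> F \<Longrightarrow> Y \<in> F \<Longrightarrow> (X, Y) \<in> (disjointness_graph F)\<^sup>*"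
  shows "non_separable F"
  unfolding non_separable_def
proof (intro allI impI)
  fix F1 F2
  assume part: "F1 \<union> F2 = F \<and> F1 \<inter> F2 = {} \<and> cross_intersecting F1 F2"
  have closed: "Y \<in> F1" if "(X, Y) \<in> (disjointness_graph F)\<^sup>*" "X \<in> F1" for X Y
    using that
  proof (induction rule: rtrancl_induct)
    case (step U V)
    then show ?case
      using part unfolding disjointness_graph_def cross_intersecting_def by blast
  qed
  show "F1 = {} \<or> F2 = {}"
  proof (rule ccontr)
    assume "\<not> (F1 = {} \<or> F2 = {})"
    then obtain X Y where "X \<in> F1" "Y \<in> F2" by blast
    with closed assms part show False by blast
  qed
qed

lemma card_exchange:
  assumes "finite B" "s \<in> B" "w \<notin> B - {s}"
  shows "card (insert w (B - {s})) = card B"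
  using assms by (simp add: card_gt_0_iff) (metis card_gt_0_iff empty_iff Suc_pred)

lemma card_Diff_sym:
  assumes "finite B" "finite D" "card B = card D"
  shows "card (B - D) = card (D - B)"
  using assms card_Diff_subset_Int[of B D] card_Diff_subset_Int[of D B] by (simp add: inf_commute)

lemma card_Int_between_iff:
  assumes "finite A"
  shows "(0 < card (B \<inter> A) \<and> card (B \<inter> A) < card A) \<longleftrightarrow> B \<inter> A \<noteq> {} \<and> \<not> A \<subseteq> B"
proof -
  have "card (B \<inter> A) < card A \<longleftrightarrow> B \<inter> A \<noteq> A"
    using assms card_seteq[of A "B \<inter> A"] psubset_card_mono[of A "B \<inter> A"] by fastforce
  then show ?thesis
    using assms by (auto simp: card_gt_0_iff)
qed

locale straddling_sets =
  fixes Z A :: "'a set" and r :: nat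
  assumes finite_Z: "finite Z"
    and A_subset: "A \<subseteq> Z"
    and r_pos: "0 < r"
    and card_Z: "2 * r + 1 \<le> card Z"
    and card_A: "card A + r \<le> card Z"
begin

definition straddling :: "'a set set" where
  "straddling = {B. B \<subseteq> Z \<and> card B = r \<and> B \<inter> A \<noteq> {} \<and> \<not> A \<subseteq> B}"

abbreviation linked :: "'a set \<Rightarrow> 'a set \<Rightarrow> bool" where
  "linked B C \<equiv> (B, C) \<in> (disjointness_graph straddling)\<^sup>*"

lemma linked_if_disjoint: "B \<in> straddling \<Longrightarrow> C \<in> straddling \<Longrightarrow> B \<inter> C = {} \<Longrightarrow> linked B C"
  unfolding disjointness_graph_def by blast

lemma straddlingI:
  assumes "B \<subseteq> Z" "card B = r" "x \<in> B" "x \<in> A" "a \<in> A" "a \<notin> B"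
  shows "B \<in> straddling"
  using assms unfolding straddling_def by blast

lemma straddlingD:
  assumes "B \<in> straddling"
  shows "B \<subseteq> Z" "finite B" "card B = r" "B \<inter> A \<noteq> {}" "\<not> A \<subseteq> B"
  using assms finite_Z finite_subset unfolding straddling_def by blast+

lemma finite_A: "finite A"
  using A_subset finite_Z finite_subset by blast

lemma straddling_avoiding:
  assumes "X \<subseteq> Z" "card X + r \<le> card Z" "z \<in> A" "z \<notin> X" "a \<in> A \<inter> X"
  obtains C where "C \<in> straddling" "z \<in> C" "C \<inter> X = {}"
proof -
  have "finite X"
    using assms(1) finite_Z finite_subset by blast
  then have "card (Z - insert z X) = card Z - (card X + 1)"
    using assms A_subset by (subst card_Diff_subset) auto
  moreover have "Z - X - {z} = Z - insert z X"
    by blast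
  ultimately have "card (Z - X - {z}) = card Z - card X - 1"
    by simp
  then have "r - 1 \<le> card (Z - X - {z})"
    using assms(2) by linarith
  then obtain T where T: "T \<subseteq> Z - X - {z}" "card T = r - 1"
    by (rule obtain_subset_with_card_n)
  have "finite T"
    using T(1) finite_Z finite_subset by blast
  moreover have "z \<notin> T"
    using T(1) by blast
  ultimately have "card (insert z T) = r"
    using T(2) r_pos by simp
  then have "insert z T \<in> straddling"
    using T assms A_subset by (intro straddlingI[of _ z a]) auto
  then show thesis
    using that T(1) assms(4) by blast
qed

lemma linked_if_small_union:
  assumes "B \<in> straddling" "D \<in> straddling" "card (B \<union> D) + r \<le> card Z" "\<not> A \<subseteq> B \<union> D"
  shows "linked B D"
proof -
  obtain z where z: "z \<in> A" "z \<notin> B \<union> D"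
    using assms(4) by blast
  obtain a where a: "a \<in> A \<inter> (B \<union> D)"
    using straddlingD(4)[OF assms(1)] by blast
  have "B \<union> D \<subseteq> Z"
    using straddlingD(1) assms(1,2) by blast
  then obtain C where C: "C \<in> straddling" "C \<inter> (B \<union> D) = {}"
    using straddling_avoiding[OF _ assms(3) z a] by metis
  then have "linked B C" "linked C D"
    using assms(1,2) linked_if_disjoint by blast+
  then show ?thesis by (rule rtrancl_trans)
qed

lemma linked_if_subset_insert:
  assumes "B \<in> straddling" "C \<in> straddling" "C \<subseteq> insert x B" "\<not> A \<subseteq> insert x B"
  shows "linked B C"
proof (rule linked_if_small_union[OF assms(1,2)])
  have "card (B \<union> C) \<le> card (insert x B)"
    using assms straddlingD(2) by (intro card_mono) auto
  also have "\<dots> \<le> r + 1"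
    using assms straddlingD(2,3) by (simp add: card_insert_if)
  finally show "card (B \<union> C) + r \<le> card Z"
    using card_Z by linarith
  show "\<not> A \<subseteq> B \<union> C"
    using assms(3,4) by blast
qed

lemma exchange_exists:
  assumes B: "B \<in> straddling" and D: "D \<in> straddling"
    and x: "x \<in> D - B" and not_covered: "\<not> A \<subseteq> insert x B"
  obtains y where "y \<in> B - D" "insert x (B - {y}) \<in> straddling"
proof -
  note B_props = straddlingD[OF B] and D_props = straddlingD[OF D]
  have card_diff: "card (B - D) = card (D - B)"
    using B_props D_props by (simp add: card_Diff_sym)
  moreover have "0 < card (D - B)"
    using x D_props(2) by (auto simp: card_gt_0_iff)
  ultimately have "B - D \<noteq> {}"
    by (metis card.empty less_irrefl)
  obtain c where c: "c \<in> A" "c \<notin> insert x B"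
    using not_covered by blast
  have exchange: "insert x (B - {y}) \<in> straddling"
    if y: "y \<in> B - D" and a: "a \<in> insert x (B - {y})" "a \<in> A" for y a
  proof -
    have "card (insert x (B - {y})) = r"
      using card_exchange[of B y x] x y B_props by auto
    then show ?thesis
      using x y a c B_props D_props by (intro straddlingI[of _ a c]) auto
  qed
  show thesis
  proof (cases "x \<in> A")
    case True
    obtain y where "y \<in> B - D"
      using \<open>B - D \<noteq> {}\<close> by blast
    with True show thesis
      using exchange[of y x] that by blast
  next
    case False
    txt \<open>Otherwise some \<open>y \<in> B - D\<close> must leave a point of \<open>A\<close> in \<open>B - {y}\<close>:
      if not, \<open>B \<inter> A = B - D = {b}\<close>, and \<open>D = insert x (B - {b})\<close> would miss \<open>A\<close>.\<close>
    have "\<exists>y \<in> B - D. \<exists>a \<in> B \<inter> A. a \<noteq> y"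
    proof (rule ccontr)
      assume "\<not> (\<exists>y \<in> B - D. \<exists>a \<in> B \<inter> A. a \<noteq> y)"
      then have single: "a = y" if "y \<in> B - D" "a \<in> B \<inter> A" for y a
        using that by blast
      obtain b where "b \<in> B \<inter> A"
        using B_props by blast
      with single \<open>B - D \<noteq> {}\<close> have "B - D = {b}" "B \<inter> A = {b}"
        by blast+
      then have "card (D - B) = 1"
        using card_diff by simp
      then have "D - B = {x}"
        using x by (metis card_1_singletonE singletonD)
      with \<open>B - D = {b}\<close> have "D \<subseteq> insert x (B - {b})"
        by blast
      with \<open>B \<inter> A = {b}\<close> False have "D \<inter> A = {}"
        by blast
      then show False
        using D_props by blast
    qed
    then obtain y a where "y \<in> B - D" "a \<in> B \<inter> A" "a \<noteq> y"
      by blast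
    then show thesis
      using exchange[of y a] that by blast
  qed
qed

lemma exchange_or_swap:
  assumes B: "B \<in> straddling" and D: "D \<in> straddling" and "B \<noteq> D"
  obtains x y where "x \<in> D - B" "y \<in> B - D" "insert x (B - {y}) \<in> straddling" "\<not> A \<subseteq> insert x B"
  | y z where "B - D = {y}" "D - B = {z}" "y \<in> A" "A - B = {z}"
proof (cases "\<exists>x \<in> D - B. \<not> A \<subseteq> insert x B")
  case True
  then obtain x where "x \<in> D - B" "\<not> A \<subseteq> insert x B"
    by blast
  with exchange_exists[OF B D] show thesis
    using that(1) by metis
next
  case False
  note B_props = straddlingD[OF B] and D_props = straddlingD[OF D]
  have "D - B \<noteq> {}"
    using card_subset_eq[of B D] B_props D_props \<open>B \<noteq> D\<close> by (metis Diff_eq_empty_iff)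
  obtain z where z: "z \<in> A" "z \<notin> B"
    using B_props by blast
  with False have "D - B \<subseteq> {z}"
    by auto
  with \<open>D - B \<noteq> {}\<close> have DB: "D - B = {z}"
    by blast
  with False have AB: "A - B = {z}"
    using z by blast
  have "card (B - D) = card (D - B)"
    using B_props D_props by (simp add: card_Diff_sym)
  with DB have "card (B - D) = 1"
    by simp
  then obtain y where BD: "B - D = {y}"
    by (rule card_1_singletonE)
  obtain a where a: "a \<in> A" "a \<notin> D"
    using D_props by blast
  with AB DB have "a \<in> B - D"
    by blast
  with a BD have "y \<in> A"
    by simp
  show thesis
    using BD DB \<open>y \<in> A\<close> AB by (rule that(2))
qed

text \<open>The detour is \<open>B \<rightarrow> B - {s} + w \<rightarrow> D - {s} + w \<rightarrow> D\<close> with \<open>w \<notin> A \<union> B\<close> and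
  \<open>s \<in> A \<inter> B - {y}\<close>; the unions along the way miss \<open>z\<close>, \<open>s\<close> and \<open>y\<close> respectively.\<close>
lemma linked_swap:
  assumes B: "B \<in> straddling" and y: "y \<in> A" "y \<in> B" and AB: "A - B = {z}"
    and card_A3: "3 \<le> card A"
  shows "linked B (insert z (B - {y}))"
proof -
  define D where "D = insert z (B - {y})"
  note B_props = straddlingD[OF B]
  have z: "z \<in> A" "z \<notin> B"
    using AB by blast+
  obtain s where s: "s \<in> A" "s \<noteq> y" "s \<noteq> z"
  proof -
    have "card {y, z} < card A"
      using card_A3 by (simp add: card_insert_if)
    then have "\<not> A \<subseteq> {y, z}"
      using finite_A by (meson card_mono finite.emptyI finite.insertI leD)
    then show thesis
      using that by blast
  qed
  with AB have "s \<in> B"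
    by blast
  have "card (A \<union> B) + 1 \<le> card A + card B"
  proof -
    have "card (A \<inter> B) \<ge> 1"
      using y B_props(2) by (metis IntI One_nat_def Suc_leI card_gt_0_iff equals0D finite_Int)
    then show ?thesis
      using card_Un_Int[OF finite_A B_props(2)] by linarith
  qed
  then have "card (A \<union> B) < card Z"
    using card_A B_props(3) by linarith
  then have "\<not> Z \<subseteq> A \<union> B"
    using card_mono[of "A \<union> B" Z] finite_A B_props(2) by auto
  then obtain w where w: "w \<in> Z" "w \<notin> A" "w \<notin> B"
    by blast
  define B1 where "B1 = insert w (B - {s})"
  define B2 where "B2 = insert w (D - {s})"
  have D_card: "card D = r"
    using card_exchange[of B y z] B_props y z unfolding D_def by auto
  have "finite D"
    using B_props(2) unfolding D_def by simp
  have D: "D \<in> straddling"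
    using D_card B_props A_subset y z unfolding D_def by (intro straddlingI[of _ z y]) auto
  have B1: "B1 \<in> straddling"
    using card_exchange[of B s w] B_props A_subset w y z s \<open>s \<in> B\<close>
    unfolding B1_def by (intro straddlingI[of _ y z]) auto
  have "s \<in> D" "w \<notin> D"
    using s \<open>s \<in> B\<close> w z unfolding D_def by auto
  then have "card B2 = r"
    using card_exchange[OF \<open>finite D\<close>] D_card unfolding B2_def by auto
  then have B2: "B2 \<in> straddling"
    using straddlingD(1)[OF D] w y z s \<open>s \<in> B\<close>
    unfolding B2_def D_def by (intro straddlingI[of _ z y]) auto
  have "linked B B1"
    using w z by (intro linked_if_subset_insert[OF B B1, of w]) (auto simp: B1_def)
  also have "linked B1 B2"
    using w s by (intro linked_if_subset_insert[OF B1 B2, of z]) (auto simp: B1_def B2_def D_def)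
  also have "linked B2 D"
    using w y z s \<open>s \<in> B\<close>
    by (intro linked_if_subset_insert[OF B2 D, of s]) (auto simp: B2_def D_def)
  finally show ?thesis
    unfolding D_def .
qed

lemma linked_if_large_or_same_trace:
  assumes "B \<in> straddling" "D \<in> straddling" "3 \<le> card A \<or> A \<inter> B = A \<inter> D"
  shows "linked B D"
  using assms
proof (induction "card (B - D)" arbitrary: B rule: less_induct)
  case less
  show ?case
  proof (cases "B = D")
    case True
    then show ?thesis by simp
  next
    case False
    show ?thesis
    proof (rule exchange_or_swap[OF less.prems(1,2) False])
      fix x y
      assume x: "x \<in> D - B" and y: "y \<in> B - D"
        and B': "insert x (B - {y}) \<in> straddling" and not_covered: "\<not> A \<subseteq> insert x B"
      have "linked B (insert x (B - {y}))"
        using not_covered by (intro linked_if_subset_insert[OF less.prems(1) B']) auto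
      moreover have "linked (insert x (B - {y})) D"
      proof (rule less.hyps[OF _ B' less.prems(2)])
        have "insert x (B - {y}) - D = (B - D) - {y}"
          using x by blast
        then show "card (insert x (B - {y}) - D) < card (B - D)"
          using y straddlingD(2)[OF less.prems(1)] by (metis card_Diff1_less finite_Diff)
        show "3 \<le> card A \<or> A \<inter> insert x (B - {y}) = A \<inter> D"
          using less.prems(3) x y by blast
      qed
      ultimately show ?thesis
        by (rule rtrancl_trans)
    next
      fix y z
      assume BD: "B - D = {y}" and DB: "D - B = {z}" and y: "y \<in> A" and AB: "A - B = {z}"
      have D: "D = insert z (B - {y})"
        using BD DB by blast
      have "A \<inter> B \<noteq> A \<inter> D"
        using BD y by blast
      then have "3 \<le> card A"
        using less.prems(3) by blast
      then show ?thesis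
        unfolding D using linked_swap[OF less.prems(1) y _ AB] BD by blast
    qed
  qed
qed

lemma straddling_connected:
  assumes B: "B \<in> straddling" and D: "D \<in> straddling"
  shows "linked B D"
proof (cases "3 \<le> card A \<or> A \<inter> B = A \<inter> D")
  case True
  then show ?thesis
    using linked_if_large_or_same_trace[OF B D] by blast
next
  case False
  obtain p q where p: "p \<in> A" "p \<in> B" and q: "q \<in> A" "q \<notin> B"
    using straddlingD(4,5)[OF B] by blast
  have "p \<noteq> q"
    using p q by blast
  then have "card {p, q} = 2"
    by simp
  with False have "card A \<le> card {p, q}"
    by simp
  then have A: "A = {p, q}"
    using card_seteq[OF finite_A, of "{p, q}"] p q by blast
  have "A \<inter> D \<noteq> {}" "\<not> A \<subseteq> D"
    using straddlingD(4,5)[OF D] by blast+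
  with False A p q have "q \<in> D" "p \<notin> D"
    by auto
  have "card D + r \<le> card Z"
    using straddlingD(3)[OF D] card_Z by linarith
  then obtain Y where Y: "Y \<in> straddling" "p \<in> Y" "Y \<inter> D = {}"
    using straddling_avoiding[OF straddlingD(1)[OF D] _ p(1) \<open>p \<notin> D\<close>, of q] q(1) \<open>q \<in> D\<close> by blast
  have "A \<inter> B = A \<inter> Y"
    using A p q Y \<open>q \<in> D\<close> by blast
  then have "linked B Y"
    using linked_if_large_or_same_trace[OF B Y(1)] by blast
  moreover have "linked Y D"
    using linked_if_disjoint[OF Y(1) D Y(3)] .
  ultimately show ?thesis
    by (rule rtrancl_trans)
qed

end

theorem proposition3p3:
  fixes Z A :: "'a set" and r m :: nat
  assumes "r \<ge> 2"
    and "finite Z" and "card Z = m" and "m \<ge> 2 * r + 1"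
    and "A \<subseteq> Z" and "card A = r - 1 \<or> card A = r"
  shows "non_separable {B. B \<subseteq> Z \<and> card B = r \<and> 0 < card (B \<inter> A) \<and> card (B \<inter> A) < card A}"
proof -
  interpret straddling_sets Z A r
    using assms by unfold_locales auto
  have "{B. B \<subseteq> Z \<and> card B = r \<and> 0 < card (B \<inter> A) \<and> card (B \<inter> A) < card A} = straddling"
    using card_Int_between_iff[OF finite_A] unfolding straddling_def by blast
  then show ?thesis
    using straddling_connected non_separable_if_connected by metis
qed

end
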